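(* (1) $\mathsf{LKur}$ is strictly contained in $\mathsf{GKur}$. (2) $\mathsf{MGrz}\vee\mathsf{LKur}=\mathsf{MGrz}\vee\mathsf{GKur}$, where $\vee$ denotes the smallest extension of $\mathsf{MS4}$ containing both logics.
   Context: $\mathsf{MIPC}$ is the smallest set of formulas in the bimodal language $\mathcal{L}_{\forall\exists}$ containing all theorems of $\mathsf{IPC}$; $\forall(p\wedge q)\leftrightarrow(\forall p\wedge\forall q)$, $\forall p\to p$, $\forall p\to\forall\forall p$; $\exists(p\vee q)\leftrightarrow(\exists p\vee\exists q)$, $p\to\exists p$, $\exists\exists p\to\exists p$, $(\exists p\wedge\exists q)\to\exists(\exists p\wedge q)$; $\exists\forall p\to\forall p$, $\exists p\to\forall\exists p$; closed under modus ponens, substitution and $\varphi/\forall\varphi$. $\mathsf{Kur}=\mathsf{MIPC}+\forall\neg\neg p\to\neg\neg\forall p$. $\mathsf{MS4}$ is the smallest set of formulas in the classical bimodal language $\mathcal{L}_{\Box\forall}$ containing all classical tautologies, the $\mathsf{S4}$ axioms for $\Box$, the $\mathsf{S5}$ axioms for $\forall$, and $\Box\forall p\to\forall\Box p$, closed under modus ponens, substitution, $\Box$- and $\forall$-necessitation; $\Diamond=\neg\Box\neg$, $\exists=\neg\forall\neg$. $\mathsf{MGrz}=\mathsf{MS4}+\Box(\Box(p\to\Box p)\to p)\to p$; $\mathsf{LKur}=\mathsf{MS4}+\Box\forall\Diamond\Box p\to\Diamond\forall p$; $\mathsf{GKur}=\mathsf{MS4}+\{\varphi^t:\mathsf{Kur}\vdash\varphi\}$,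 with $(-)^t$ the Gödel translation: $\bot^t=\bot$, $p^t=\Box p$, $(\varphi\wedge\psi)^t=\varphi^t\wedge\psi^t$, $(\varphi\vee\psi)^t=\varphi^t\vee\psi^t$, $(\varphi\to\psi)^t=\Box(\neg\varphi^t\vee\psi^t)$, $(\forall\varphi)^t=\Box\forall\varphi^t$, $(\exists\varphi)^t=\exists\varphi^t$. *)

theory Defs
  imports Main
begin

datatype ifm = IBot | IAt nat | IAnd ifm ifm | IOr ifm ifm | IImp ifm ifm
  | IAll ifm | IEx ifm

definition INeg :: "ifm \<Rightarrow> ifm" where "INeg a = IImp a IBot"
definition IIff :: "ifm \<Rightarrow> ifm \<Rightarrow> ifm" where "IIff a b = IAnd (IImp a b) (IImp b a)"

primrec isubst :: "(nat \<Rightarrow> ifm) \<Rightarrow> ifm \<Rightarrow> ifm" where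
  "isubst s IBot = IBot"
| "isubst s (IAt n) = s n"
| "isubst s (IAnd a b) = IAnd (isubst s a) (isubst s b)"
| "isubst s (IOr a b) = IOr (isubst s a) (isubst s b)"
| "isubst s (IImp a b) = IImp (isubst s a) (isubst s b)"
| "isubst s (IAll a) = IAll (isubst s a)"
| "isubst s (IEx a) = IEx (isubst s a)"

text \<open>Axiom schemes of a standard Hilbert calculus for IPC (all instances in the
  full language, so that every substitution instance of an IPC theorem is derivable).\<close>
inductive ipc_axiom :: "ifm \<Rightarrow> bool" where
  "ipc_axiom (IImp a (IImp b a))"
| "ipc_axiom (IImp (IImp a (IImp b c)) (IImp (IImp a b) (IImp a c)))"
| "ipc_axiom (IImp (IAnd a b) a)"
| "ipc_axiom (IImp (IAnd a b) b)"
| "ipc_axiom (IImp a (IImp b (IAnd a b)))"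
| "ipc_axiom (IImp a (IOr a b))"
| "ipc_axiom (IImp b (IOr a b))"
| "ipc_axiom (IImp (IImp a c) (IImp (IImp b c) (IImp (IOr a b) c)))"
| "ipc_axiom (IImp IBot a)"

abbreviation "ip \<equiv> IAt 0"
abbreviation "iq \<equiv> IAt 1"

definition mipc_axioms :: "ifm set" where
  "mipc_axioms = {
     IIff (IAll (IAnd ip iq)) (IAnd (IAll ip) (IAll iq)),
     IImp (IAll ip) ip,
     IImp (IAll ip) (IAll (IAll ip)),
     IIff (IEx (IOr ip iq)) (IOr (IEx ip) (IEx iq)),
     IImp ip (IEx ip),
     IImp (IEx (IEx ip)) (IEx ip),
     IImp (IAnd (IEx ip) (IEx iq)) (IEx (IAnd (IEx ip) iq)),
     IImp (IEx (IAll ip)) (IAll ip),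
     IImp (IEx ip) (IAll (IEx ip)) }"

inductive_set MIPC_ext :: "ifm set \<Rightarrow> ifm set" for G :: "ifm set" where
  ipc: "ipc_axiom a \<Longrightarrow> a \<in> MIPC_ext G"
| ax: "a \<in> mipc_axioms \<Longrightarrow> a \<in> MIPC_ext G"
| extra: "a \<in> G \<Longrightarrow> a \<in> MIPC_ext G"
| mp: "a \<in> MIPC_ext G \<Longrightarrow> IImp a b \<in> MIPC_ext G \<Longrightarrow> b \<in> MIPC_ext G"
| subst: "a \<in> MIPC_ext G \<Longrightarrow> isubst s a \<in> MIPC_ext G"
| nec: "a \<in> MIPC_ext G \<Longrightarrow> IAll a \<in> MIPC_ext G"

definition MIPC :: "ifm set" where "MIPC = MIPC_ext {}"

definition Kur :: "ifm set" where
  "Kur = MIPC_ext {IImp (IAll (INeg (INeg ip))) (INeg (INeg (IAll ip)))}"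

datatype cfm = CBot | CAt nat | CAnd cfm cfm | COr cfm cfm | CImp cfm cfm
  | CBox cfm | CAll cfm

definition CNeg :: "cfm \<Rightarrow> cfm" where "CNeg a = CImp a CBot"
definition CDia :: "cfm \<Rightarrow> cfm" where "CDia a = CNeg (CBox (CNeg a))"
definition CEx :: "cfm \<Rightarrow> cfm" where "CEx a = CNeg (CAll (CNeg a))"

primrec csubst :: "(nat \<Rightarrow> cfm) \<Rightarrow> cfm \<Rightarrow> cfm" where
  "csubst s CBot = CBot"
| "csubst s (CAt n) = s n"
| "csubst s (CAnd a b) = CAnd (csubst s a) (csubst s b)"
| "csubst s (COr a b) = COr (csubst s a) (csubst s b)"
| "csubst s (CImp a b) = CImp (csubst s a) (csubst s b)"
| "csubst s (CBox a) = CBox (csubst s a)"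
| "csubst s (CAll a) = CAll (csubst s a)"

inductive cpc_axiom :: "cfm \<Rightarrow> bool" where
  "cpc_axiom (CImp a (CImp b a))"
| "cpc_axiom (CImp (CImp a (CImp b c)) (CImp (CImp a b) (CImp a c)))"
| "cpc_axiom (CImp (CAnd a b) a)"
| "cpc_axiom (CImp (CAnd a b) b)"
| "cpc_axiom (CImp a (CImp b (CAnd a b)))"
| "cpc_axiom (CImp a (COr a b))"
| "cpc_axiom (CImp b (COr a b))"
| "cpc_axiom (CImp (CImp a c) (CImp (CImp b c) (CImp (COr a b) c)))"
| "cpc_axiom (CImp CBot a)"
| "cpc_axiom (CImp (CNeg (CNeg a)) a)"

abbreviation "cp \<equiv> CAt 0"
abbreviation "cq \<equiv> CAt 1"

definition ms4_axioms :: "cfm set" where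
  "ms4_axioms = {
     CImp (CBox (CImp cp cq)) (CImp (CBox cp) (CBox cq)),
     CImp (CBox cp) cp,
     CImp (CBox cp) (CBox (CBox cp)),
     CImp (CAll (CImp cp cq)) (CImp (CAll cp) (CAll cq)),
     CImp (CAll cp) cp,
     CImp (CEx cp) (CAll (CEx cp)),
     CImp (CBox (CAll cp)) (CAll (CBox cp)) }"

inductive_set MS4_ext :: "cfm set \<Rightarrow> cfm set" for G :: "cfm set" where
  cpc: "cpc_axiom a \<Longrightarrow> a \<in> MS4_ext G"
| ax: "a \<in> ms4_axioms \<Longrightarrow> a \<in> MS4_ext G"
| extra: "a \<in> G \<Longrightarrow> a \<in> MS4_ext G"
| mp: "a \<in> MS4_ext G \<Longrightarrow> CImp a b \<in> MS4_ext G \<Longrightarrow> b \<in> MS4_ext G"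
| subst: "a \<in> MS4_ext G \<Longrightarrow> csubst s a \<in> MS4_ext G"
| nec_box: "a \<in> MS4_ext G \<Longrightarrow> CBox a \<in> MS4_ext G"
| nec_all: "a \<in> MS4_ext G \<Longrightarrow> CAll a \<in> MS4_ext G"

definition MS4 :: "cfm set" where "MS4 = MS4_ext {}"

definition MGrz :: "cfm set" where
  "MGrz = MS4_ext {CImp (CBox (CImp (CBox (CImp cp (CBox cp))) cp)) cp}"

definition LKur :: "cfm set" where
  "LKur = MS4_ext {CImp (CBox (CAll (CDia (CBox cp)))) (CDia (CAll cp))}"

primrec goedel :: "ifm \<Rightarrow> cfm" where
  "goedel IBot = CBot"
| "goedel (IAt n) = CBox (CAt n)"
| "goedel (IAnd a b) = CAnd (goedel a) (goedel b)"
| "goedel (IOr a b) = COr (goedel a) (goedel b)"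
| "goedel (IImp a b) = CBox (COr (CNeg (goedel a)) (goedel b))"
| "goedel (IAll a) = CBox (CAll (goedel a))"
| "goedel (IEx a) = CEx (goedel a)"

definition GKur :: "cfm set" where
  "GKur = MS4_ext (goedel ` Kur)"

definition join :: "cfm set \<Rightarrow> cfm set \<Rightarrow> cfm set" where
  "join L M = MS4_ext (L \<union> M)"

end

theory Submission
  imports Defs
begin

text \<open>For (1): in MS4 the Goedel translation of Kuroda's axiom implies the LKur axiom
  \<open>\<box>\<forall>\<diamond>\<box>p \<longrightarrow> \<diamond>\<forall>p\<close>, so \<open>LKur \<subseteq> GKur\<close>; a three-point MS4 frame validates the LKur axiom
  but refutes the translated Kuroda axiom, so the inclusion is strict.

  For (2): the Grzegorczyk axiom yields the McKinsey axiom \<open>\<box>\<diamond>p \<longrightarrow> \<diamond>\<box>p\<close>, and McKinsey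
  together with the LKur axiom proves the translated Kuroda axiom for every stable formula
  (\<open>a \<longrightarrow> \<box>a\<close>). Goedel translations are stable and the translation carries MIPC-derivations
  to MS4-derivations, hence \<open>GKur \<subseteq> MGrz \<or> LKur\<close>.\<close>

abbreviation provable :: "cfm set \<Rightarrow> cfm \<Rightarrow> bool" (infix "\<turnstile>" 50) where
  "G \<turnstile> a \<equiv> a \<in> MS4_ext G"

section \<open>Tautologies are theorems\<close>

fun prop_eval :: "(cfm \<Rightarrow> bool) \<Rightarrow> cfm \<Rightarrow> bool" where
  "prop_eval v CBot = False"
| "prop_eval v (CAt n) = v (CAt n)"
| "prop_eval v (CAnd a b) = (prop_eval v a \<and> prop_eval v b)"
| "prop_eval v (COr a b) = (prop_eval v a \<or> prop_eval v b)"
| "prop_eval v (CImp a b) = (prop_eval v a \<longrightarrow> prop_eval v b)"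
| "prop_eval v (CBox a) = v (CBox a)"
| "prop_eval v (CAll a) = v (CAll a)"

lemma prop_eval_CNeg [simp]: "prop_eval v (CNeg a) = (\<not> prop_eval v a)"
  by (simp add: CNeg_def)

lemma prop_eval_CDia [simp]: "prop_eval v (CDia a) = (\<not> v (CBox (CNeg a)))"
  by (simp add: CDia_def)

lemma prop_eval_CEx [simp]: "prop_eval v (CEx a) = (\<not> v (CAll (CNeg a)))"
  by (simp add: CEx_def)

fun prop_atoms :: "cfm \<Rightarrow> cfm set" where
  "prop_atoms CBot = {}"
| "prop_atoms (CAt n) = {CAt n}"
| "prop_atoms (CAnd a b) = prop_atoms a \<union> prop_atoms b"
| "prop_atoms (COr a b) = prop_atoms a \<union> prop_atoms b"
| "prop_atoms (CImp a b) = prop_atoms a \<union> prop_atoms b"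
| "prop_atoms (CBox a) = {CBox a}"
| "prop_atoms (CAll a) = {CAll a}"

lemma finite_prop_atoms: "finite (prop_atoms a)"
  by (induct a) auto

lemma prop_eval_prop_atom: "x \<in> prop_atoms a \<Longrightarrow> prop_eval v x = v x"
  by (induct a) auto

text \<open>Necessitation is not a rule of derivations from hypotheses; this is what makes the
  deduction theorem hold.\<close>
inductive derives :: "cfm set \<Rightarrow> cfm set \<Rightarrow> cfm \<Rightarrow> bool" for G where
  hyp: "a \<in> \<Gamma> \<Longrightarrow> derives G \<Gamma> a"
| logic: "G \<turnstile> a \<Longrightarrow> derives G \<Gamma> a"
| mp: "derives G \<Gamma> a \<Longrightarrow> derives G \<Gamma> (CImp a b) \<Longrightarrow> derives G \<Gamma> b"

lemma derives_cpc_axiom: "cpc_axiom a \<Longrightarrow> derives G \<Gamma> a"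
  by (intro derives.logic MS4_ext.cpc)

lemma derives_mp2:
  "derives G \<Gamma> a \<Longrightarrow> derives G \<Gamma> b \<Longrightarrow> derives G \<Gamma> (CImp a (CImp b c)) \<Longrightarrow> derives G \<Gamma> c"
  by (meson derives.mp)

lemma derives_insert: "derives G (insert a \<Gamma>) a"
  by (simp add: derives.hyp)

lemma derives_mono: "derives G \<Gamma> a \<Longrightarrow> \<Gamma> \<subseteq> \<Delta> \<Longrightarrow> derives G \<Delta> a"
  by (induct rule: derives.induct) (auto intro: derives.intros)

lemma derives_insertI: "derives G \<Gamma> a \<Longrightarrow> derives G (insert b \<Gamma>) a"
  by (erule derives_mono) blast

lemma provable_imp_refl: "G \<turnstile> CImp a a"
proof -
  have "G \<turnstile> CImp a (CImp (CImp a a) a)" and "G \<turnstile> CImp a (CImp a a)"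
    and "G \<turnstile> CImp (CImp a (CImp (CImp a a) a)) (CImp (CImp a (CImp a a)) (CImp a a))"
    by (intro MS4_ext.cpc cpc_axiom.intros)+
  then show ?thesis by (meson MS4_ext.mp)
qed

lemma derives_deduction: "derives G (insert a \<Gamma>) b \<Longrightarrow> derives G \<Gamma> (CImp a b)"
proof (induct "insert a \<Gamma>" b rule: derives.induct)
  case (hyp c)
  show ?case
  proof (cases "c = a")
    case True
    then show ?thesis by (simp add: derives.logic provable_imp_refl)
  next
    case False
    with hyp have "derives G \<Gamma> c" by (auto intro: derives.hyp)
    then show ?thesis by (rule derives.mp) (intro derives_cpc_axiom cpc_axiom.intros)
  qed
next
  case (logic c)
  then have "derives G \<Gamma> c" by (rule derives.logic)
  then show ?case by (rule derives.mp) (intro derives_cpc_axiom cpc_axiom.intros)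
next
  case (mp c d)
  have "derives G \<Gamma> (CImp (CImp a (CImp c d)) (CImp (CImp a c) (CImp a d)))"
    by (intro derives_cpc_axiom cpc_axiom.intros)
  with mp show ?case by (meson derives.mp)
qed

lemma derives_provable: "derives G \<Gamma> a \<Longrightarrow> \<Gamma> \<subseteq> MS4_ext G \<Longrightarrow> G \<turnstile> a"
  by (induct rule: derives.induct) (auto intro: MS4_ext.mp)

lemma derives_contradiction: "derives G \<Gamma> a \<Longrightarrow> derives G \<Gamma> (CNeg a) \<Longrightarrow> derives G \<Gamma> CBot"
  unfolding CNeg_def by (rule derives.mp)

lemma derives_CNegI: "derives G (insert a \<Gamma>) CBot \<Longrightarrow> derives G \<Gamma> (CNeg a)"
  unfolding CNeg_def by (rule derives_deduction)

lemma derives_CAnd: "derives G \<Gamma> a \<Longrightarrow> derives G \<Gamma> b \<Longrightarrow> derives G \<Gamma> (CAnd a b)"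
  by (erule derives_mp2, assumption) (intro derives_cpc_axiom cpc_axiom.intros)

lemma derives_not_CAnd1: "derives G \<Gamma> (CNeg a) \<Longrightarrow> derives G \<Gamma> (CNeg (CAnd a b))"
proof (rule derives_CNegI)
  assume "derives G \<Gamma> (CNeg a)"
  moreover have "derives G (insert (CAnd a b) \<Gamma>) a"
    by (rule derives.mp[OF derives_insert]) (intro derives_cpc_axiom cpc_axiom.intros)
  ultimately show "derives G (insert (CAnd a b) \<Gamma>) CBot"
    by (meson derives_contradiction derives_insertI)
qed

lemma derives_not_CAnd2: "derives G \<Gamma> (CNeg b) \<Longrightarrow> derives G \<Gamma> (CNeg (CAnd a b))"
proof (rule derives_CNegI)
  assume "derives G \<Gamma> (CNeg b)"
  moreover have "derives G (insert (CAnd a b) \<Gamma>) b"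
    by (rule derives.mp[OF derives_insert]) (intro derives_cpc_axiom cpc_axiom.intros)
  ultimately show "derives G (insert (CAnd a b) \<Gamma>) CBot"
    by (meson derives_contradiction derives_insertI)
qed

lemma derives_COr1: "derives G \<Gamma> a \<Longrightarrow> derives G \<Gamma> (COr a b)"
  by (erule derives.mp) (intro derives_cpc_axiom cpc_axiom.intros)

lemma derives_COr2: "derives G \<Gamma> b \<Longrightarrow> derives G \<Gamma> (COr a b)"
  by (erule derives.mp) (intro derives_cpc_axiom cpc_axiom.intros)

lemma derives_not_COr:
  "derives G \<Gamma> (CNeg a) \<Longrightarrow> derives G \<Gamma> (CNeg b) \<Longrightarrow> derives G \<Gamma> (CNeg (COr a b))"
  unfolding CNeg_def by (erule derives_mp2, assumption) (intro derives_cpc_axiom cpc_axiom.intros)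

lemma derives_CImp1: "derives G \<Gamma> (CNeg a) \<Longrightarrow> derives G \<Gamma> (CImp a b)"
proof (rule derives_deduction)
  assume "derives G \<Gamma> (CNeg a)"
  then have "derives G (insert a \<Gamma>) CBot"
    by (meson derives_contradiction derives_insert derives_insertI)
  then show "derives G (insert a \<Gamma>) b"
    by (rule derives.mp) (intro derives_cpc_axiom cpc_axiom.intros)
qed

lemma derives_CImp2: "derives G \<Gamma> b \<Longrightarrow> derives G \<Gamma> (CImp a b)"
  by (erule derives.mp) (intro derives_cpc_axiom cpc_axiom.intros)

lemma derives_not_CImp:
  "derives G \<Gamma> a \<Longrightarrow> derives G \<Gamma> (CNeg b) \<Longrightarrow> derives G \<Gamma> (CNeg (CImp a b))"
proof (rule derives_CNegI)
  assume "derives G \<Gamma> a" and "derives G \<Gamma> (CNeg b)"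
  moreover from \<open>derives G \<Gamma> a\<close> have "derives G (insert (CImp a b) \<Gamma>) b"
    by (meson derives.mp derives_insert derives_insertI)
  ultimately show "derives G (insert (CImp a b) \<Gamma>) CBot"
    by (meson derives_contradiction derives_insertI)
qed

lemma derives_excluded_middle: "derives G \<Gamma> (COr a (CNeg a))"
proof -
  let ?em = "COr a (CNeg a)"
  have "derives G (insert a (insert (CNeg ?em) \<Gamma>)) CBot"
    by (meson derives_contradiction derives_COr1 derives_insert derives_insertI)
  then have "derives G (insert (CNeg ?em) \<Gamma>) ?em"
    by (intro derives_COr2 derives_CNegI)
  then have "derives G \<Gamma> (CNeg (CNeg ?em))"
    by (meson derives_contradiction derives_CNegI derives_insert)
  then show ?thesis
    by (rule derives.mp) (intro derives_cpc_axiom cpc_axiom.intros)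
qed

lemma derives_cases:
  assumes "derives G (insert a \<Gamma>) b" and "derives G (insert (CNeg a) \<Gamma>) b"
  shows "derives G \<Gamma> b"
proof -
  have "derives G \<Gamma> (CImp (CImp a b) (CImp (CImp (CNeg a) b) (CImp (COr a (CNeg a)) b)))"
    by (intro derives_cpc_axiom cpc_axiom.intros)
  with assms show ?thesis
    by (meson derives.mp derives_deduction derives_excluded_middle)
qed

definition literal :: "(cfm \<Rightarrow> bool) \<Rightarrow> cfm \<Rightarrow> cfm" where
  "literal v a = (if prop_eval v a then a else CNeg a)"

lemma derives_literal: "prop_atoms a \<subseteq> S \<Longrightarrow> derives G (literal v ` S) (literal v a)"
proof (induct a)
  case CBot
  then show ?case by (simp add: literal_def CNeg_def derives.logic provable_imp_refl)
next
  case (CAnd a b)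
  then show ?case
    by (auto simp: literal_def intro: derives_CAnd derives_not_CAnd1 derives_not_CAnd2)
next
  case (COr a b)
  then show ?case
    by (auto simp: literal_def intro: derives_COr1 derives_COr2 derives_not_COr)
next
  case (CImp a b)
  then show ?case
    by (auto simp: literal_def intro: derives_CImp1 derives_CImp2 derives_not_CImp)
qed (auto intro: derives.hyp)

lemma derives_eliminate_literals:
  assumes "finite S" and "S \<subseteq> prop_atoms a" and "\<And>v. derives G (\<Gamma> \<union> literal v ` S) b"
  shows "derives G \<Gamma> b"
  using assms
proof (induct S rule: finite_induct)
  case empty
  then show ?case by simp
next
  case (insert x S)
  have eval_x: "prop_eval v x = v x" for v
    using insert.prems(1) prop_eval_prop_atom by blast
  have literals_S: "literal (v(x := c)) ` S = literal v ` S" for v c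
  proof (rule image_cong[OF refl])
    fix y
    assume "y \<in> S"
    with insert have "y \<noteq> x" and "y \<in> prop_atoms a" by auto
    then show "literal (v(x := c)) y = literal v y"
      by (simp add: literal_def prop_eval_prop_atom)
  qed
  show ?case
  proof (rule insert.hyps(3))
    show "S \<subseteq> prop_atoms a" using insert.prems(1) by simp
    fix v
    have "literal (v(x := True)) x = x" and "literal (v(x := False)) x = CNeg x"
      by (simp_all add: literal_def eval_x)
    then have "derives G (insert x (\<Gamma> \<union> literal v ` S)) b"
      and "derives G (insert (CNeg x) (\<Gamma> \<union> literal v ` S)) b"
      using insert.prems(2)[of "v(x := True)"] insert.prems(2)[of "v(x := False)"]
      by (simp_all only: image_insert literals_S Un_insert_right)
    then show "derives G (\<Gamma> \<union> literal v ` S) b"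
      by (rule derives_cases)
  qed
qed

theorem tautology_provable:
  assumes "\<And>v. prop_eval v a"
  shows "G \<turnstile> a"
proof -
  have "derives G ({} \<union> literal v ` prop_atoms a) a" for v
    using derives_literal[of a "prop_atoms a" G v] assms by (simp add: literal_def)
  then have "derives G {} a"
    by (rule derives_eliminate_literals[OF finite_prop_atoms order_refl])
  then show ?thesis
    by (rule derives_provable) simp
qed

lemma taut_cons1:
  assumes "G \<turnstile> a" and "\<And>v. prop_eval v a \<Longrightarrow> prop_eval v b"
  shows "G \<turnstile> b"
proof -
  have "G \<turnstile> CImp a b" by (rule tautology_provable) (simp add: assms(2))
  with assms(1) show ?thesis by (rule MS4_ext.mp)
qed

lemma taut_cons2:
  assumes "G \<turnstile> a" and "G \<turnstile> b" and "\<And>v. prop_eval v a \<Longrightarrow> prop_eval v b \<Longrightarrow> prop_eval v c"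
  shows "G \<turnstile> c"
proof -
  have "G \<turnstile> CImp a (CImp b c)" by (rule tautology_provable) (simp add: assms(3))
  with assms(1,2) show ?thesis by (meson MS4_ext.mp)
qed

lemma taut_cons3:
  assumes "G \<turnstile> a" and "G \<turnstile> b" and "G \<turnstile> c"
    and "\<And>v. prop_eval v a \<Longrightarrow> prop_eval v b \<Longrightarrow> prop_eval v c \<Longrightarrow> prop_eval v d"
  shows "G \<turnstile> d"
proof -
  have "G \<turnstile> CImp a (CImp b (CImp c d))" by (rule tautology_provable) (simp add: assms(4))
  with assms(1-3) show ?thesis by (meson MS4_ext.mp)
qed

lemma imp_trans: "G \<turnstile> CImp a b \<Longrightarrow> G \<turnstile> CImp b c \<Longrightarrow> G \<turnstile> CImp a c"
  by (erule taut_cons2) auto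

lemma csubst_CNeg [simp]: "csubst s (CNeg a) = CNeg (csubst s a)"
  by (simp add: CNeg_def)

lemma csubst_CDia [simp]: "csubst s (CDia a) = CDia (csubst s a)"
  by (simp add: CDia_def)

lemma csubst_CEx [simp]: "csubst s (CEx a) = CEx (csubst s a)"
  by (simp add: CEx_def)

definition subst_pq :: "cfm \<Rightarrow> cfm \<Rightarrow> nat \<Rightarrow> cfm" where
  "subst_pq a b = (\<lambda>n. if n = 0 then a else if n = 1 then b else CAt n)"

lemma subst_pq_simps [simp]: "subst_pq a b 0 = a" "subst_pq a b (Suc 0) = b"
  by (simp_all add: subst_pq_def)

lemma ms4_axiom_instance: "x \<in> ms4_axioms \<Longrightarrow> G \<turnstile> csubst (subst_pq a b) x"
  by (intro MS4_ext.subst MS4_ext.ax)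

lemma box_K: "G \<turnstile> CImp (CBox (CImp a b)) (CImp (CBox a) (CBox b))"
  using ms4_axiom_instance[of "CImp (CBox (CImp cp cq)) (CImp (CBox cp) (CBox cq))"]
  by (simp add: ms4_axioms_def)

lemma box_T: "G \<turnstile> CImp (CBox a) a"
  using ms4_axiom_instance[of "CImp (CBox cp) cp"] by (simp add: ms4_axioms_def)

lemma box_4: "G \<turnstile> CImp (CBox a) (CBox (CBox a))"
  using ms4_axiom_instance[of "CImp (CBox cp) (CBox (CBox cp))"] by (simp add: ms4_axioms_def)

lemma all_K: "G \<turnstile> CImp (CAll (CImp a b)) (CImp (CAll a) (CAll b))"
  using ms4_axiom_instance[of "CImp (CAll (CImp cp cq)) (CImp (CAll cp) (CAll cq))"]
  by (simp add: ms4_axioms_def)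

lemma all_T: "G \<turnstile> CImp (CAll a) a"
  using ms4_axiom_instance[of "CImp (CAll cp) cp"] by (simp add: ms4_axioms_def)

lemma ex_imp_all_ex: "G \<turnstile> CImp (CEx a) (CAll (CEx a))"
  using ms4_axiom_instance[of "CImp (CEx cp) (CAll (CEx cp))"] by (simp add: ms4_axioms_def)

lemma box_all_imp_all_box: "G \<turnstile> CImp (CBox (CAll a)) (CAll (CBox a))"
  using ms4_axiom_instance[of "CImp (CBox (CAll cp)) (CAll (CBox cp))"] by (simp add: ms4_axioms_def)

lemma box_mono: "G \<turnstile> CImp a b \<Longrightarrow> G \<turnstile> CImp (CBox a) (CBox b)"
  by (rule MS4_ext.mp[OF MS4_ext.nec_box box_K])

lemma all_mono: "G \<turnstile> CImp a b \<Longrightarrow> G \<turnstile> CImp (CAll a) (CAll b)"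
  by (rule MS4_ext.mp[OF MS4_ext.nec_all all_K])

lemma box_mono2:
  assumes "G \<turnstile> CImp (CAnd a b) c"
  shows "G \<turnstile> CImp (CAnd (CBox a) (CBox b)) (CBox c)"
proof -
  have "G \<turnstile> CImp a (CImp b c)" using assms by (rule taut_cons1) auto
  then have "G \<turnstile> CImp (CBox a) (CBox (CImp b c))" by (rule box_mono)
  then show ?thesis by (rule taut_cons2[OF _ box_K]) auto
qed

lemma all_mono2:
  assumes "G \<turnstile> CImp (CAnd a b) c"
  shows "G \<turnstile> CImp (CAnd (CAll a) (CAll b)) (CAll c)"
proof -
  have "G \<turnstile> CImp a (CImp b c)" using assms by (rule taut_cons1) auto
  then have "G \<turnstile> CImp (CAll a) (CAll (CImp b c))" by (rule all_mono)
  then show ?thesis by (rule taut_cons2[OF _ all_K]) auto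
qed

lemma dia_mono:
  assumes "G \<turnstile> CImp a b"
  shows "G \<turnstile> CImp (CDia a) (CDia b)"
proof -
  have "G \<turnstile> CImp (CNeg b) (CNeg a)" using assms by (rule taut_cons1) auto
  then have "G \<turnstile> CImp (CBox (CNeg b)) (CBox (CNeg a))" by (rule box_mono)
  then show ?thesis by (rule taut_cons1) auto
qed

lemma ex_mono:
  assumes "G \<turnstile> CImp a b"
  shows "G \<turnstile> CImp (CEx a) (CEx b)"
proof -
  have "G \<turnstile> CImp (CNeg b) (CNeg a)" using assms by (rule taut_cons1) auto
  then have "G \<turnstile> CImp (CAll (CNeg b)) (CAll (CNeg a))" by (rule all_mono)
  then show ?thesis by (rule taut_cons1) auto
qed

lemma box_CAnd: "G \<turnstile> CImp (CBox (CAnd a b)) (CAnd (CBox a) (CBox b))"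
proof -
  have "G \<turnstile> CImp (CBox (CAnd a b)) (CBox a)" and "G \<turnstile> CImp (CBox (CAnd a b)) (CBox b)"
    by (intro box_mono tautology_provable; simp)+
  then show ?thesis by (rule taut_cons2) auto
qed

lemma all_CAnd: "G \<turnstile> CImp (CAll (CAnd a b)) (CAnd (CAll a) (CAll b))"
proof -
  have "G \<turnstile> CImp (CAll (CAnd a b)) (CAll a)" and "G \<turnstile> CImp (CAll (CAnd a b)) (CAll b)"
    by (intro all_mono tautology_provable; simp)+
  then show ?thesis by (rule taut_cons2) auto
qed

lemma CAnd_box: "G \<turnstile> CImp (CAnd (CBox a) (CBox b)) (CBox (CAnd a b))"
  by (intro box_mono2 tautology_provable) simp

lemma CAnd_all: "G \<turnstile> CImp (CAnd (CAll a) (CAll b)) (CAll (CAnd a b))"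
  by (intro all_mono2 tautology_provable) simp

lemma imp_ex: "G \<turnstile> CImp a (CEx a)"
  by (rule taut_cons1[OF all_T[where a="CNeg a"]]) auto

lemma dia_dia: "G \<turnstile> CImp (CDia (CDia a)) (CDia a)"
proof -
  have "G \<turnstile> CImp (CBox (CBox (CNeg a))) (CBox (CNeg (CDia a)))"
    by (intro box_mono tautology_provable) simp
  then have "G \<turnstile> CImp (CBox (CNeg a)) (CBox (CNeg (CDia a)))"
    by (rule imp_trans[OF box_4])
  then show ?thesis by (rule taut_cons1) auto
qed

lemma dia_box_CAnd: "G \<turnstile> CImp (CAnd (CDia a) (CBox b)) (CDia (CAnd a b))"
proof -
  have "G \<turnstile> CImp (CAnd (CBox (CNeg (CAnd a b))) (CBox b)) (CBox (CNeg a))"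
    by (intro box_mono2 tautology_provable) auto
  then show ?thesis by (rule taut_cons1) auto
qed

lemma ex_all_imp_all: "G \<turnstile> CImp (CEx (CAll a)) (CAll a)"
proof -
  have dneg_elim: "G \<turnstile> CImp (CAll (CNeg (CNeg a))) (CAll a)"
    and dneg_intro: "G \<turnstile> CImp (CAll a) (CAll (CNeg (CNeg a)))"
    by (intro all_mono tautology_provable; simp)+
  from dneg_intro have "G \<turnstile> CImp (CEx (CNeg a)) (CNeg (CAll a))"
    by (rule taut_cons1) auto
  then have "G \<turnstile> CImp (CAll (CEx (CNeg a))) (CAll (CNeg (CAll a)))"
    by (rule all_mono)
  with dneg_elim ex_imp_all_ex[where a="CNeg a"] show ?thesis
    by (rule taut_cons3) auto
qed

lemma all_all: "G \<turnstile> CImp (CAll a) (CAll (CAll a))"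
  by (rule imp_trans[OF imp_ex imp_trans[OF ex_imp_all_ex all_mono[OF ex_all_imp_all]]])

lemma ex_ex: "G \<turnstile> CImp (CEx (CEx a)) (CEx a)"
proof -
  have "G \<turnstile> CImp (CAll (CAll (CNeg a))) (CAll (CNeg (CEx a)))"
    by (intro all_mono tautology_provable) simp
  then have "G \<turnstile> CImp (CAll (CNeg a)) (CAll (CNeg (CEx a)))"
    by (rule imp_trans[OF all_all])
  then show ?thesis by (rule taut_cons1) auto
qed

lemma all_ex_CAnd: "G \<turnstile> CImp (CAnd (CAll a) (CEx b)) (CEx (CAnd a b))"
proof -
  have "G \<turnstile> CImp (CAnd (CAll a) (CAll (CNeg (CAnd a b)))) (CAll (CNeg b))"
    by (intro all_mono2 tautology_provable) auto
  then show ?thesis by (rule taut_cons1) auto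
qed

lemma ex_COr: "G \<turnstile> CImp (CEx (COr a b)) (COr (CEx a) (CEx b))"
proof -
  have "G \<turnstile> CImp (CAnd (CAll (CNeg a)) (CAll (CNeg b))) (CAll (CNeg (COr a b)))"
    by (intro all_mono2 tautology_provable) auto
  then show ?thesis by (rule taut_cons1) auto
qed

lemma COr_ex: "G \<turnstile> CImp (COr (CEx a) (CEx b)) (CEx (COr a b))"
proof -
  have "G \<turnstile> CImp (CEx a) (CEx (COr a b))" and "G \<turnstile> CImp (CEx b) (CEx (COr a b))"
    by (intro ex_mono tautology_provable; simp)+
  then show ?thesis by (rule taut_cons2) auto
qed

lemma box_all_imp_all_box_all: "G \<turnstile> CImp (CBox (CAll a)) (CAll (CBox (CAll a)))"
  by (rule imp_trans[OF box_mono[OF all_all] box_all_imp_all_box])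

lemma ex_box_all_imp_box_all: "G \<turnstile> CImp (CEx (CBox (CAll a))) (CBox (CAll a))"
  by (rule imp_trans[OF imp_trans[OF ex_mono[OF box_all_imp_all_box_all] ex_all_imp_all] all_T])

lemma ex_box_imp_box_ex: "G \<turnstile> CImp (CEx (CBox a)) (CBox (CEx a))"
proof -
  have "G \<turnstile> CImp (CEx (CBox a)) (CEx (CBox (CAll (CEx a))))"
    by (intro ex_mono box_mono imp_trans[OF imp_ex ex_imp_all_ex])
  moreover have "G \<turnstile> CImp (CBox (CAll (CEx a))) (CBox (CEx a))"
    by (rule imp_trans[OF box_all_imp_all_box all_T])
  ultimately show ?thesis
    using ex_box_all_imp_box_all by (blast intro: imp_trans)
qed

section \<open>The Goedel translation of MIPC\<close>

definition stable :: "cfm set \<Rightarrow> cfm \<Rightarrow> bool" where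
  "stable G a \<longleftrightarrow> G \<turnstile> CImp a (CBox a)"

lemma stable_CBox: "stable G (CBox a)"
  unfolding stable_def by (rule box_4)

lemma stable_CBot: "stable G CBot"
  unfolding stable_def by (rule tautology_provable) simp

lemma stable_CAnd:
  assumes "stable G a" and "stable G b"
  shows "stable G (CAnd a b)"
  using assms CAnd_box[where a=a and b=b] unfolding stable_def by (rule taut_cons3) auto

lemma stable_COr:
  assumes "stable G a" and "stable G b"
  shows "stable G (COr a b)"
proof -
  have "G \<turnstile> CImp (CBox a) (CBox (COr a b))" and "G \<turnstile> CImp (CBox b) (CBox (COr a b))"
    by (intro box_mono tautology_provable; simp)+
  with assms have "G \<turnstile> CImp a (CBox (COr a b))" and "G \<turnstile> CImp b (CBox (COr a b))"
    unfolding stable_def by (blast intro: imp_trans)+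
  then show ?thesis
    unfolding stable_def by (rule taut_cons2) auto
qed

lemma stable_CEx: "stable G a \<Longrightarrow> stable G (CEx a)"
  unfolding stable_def by (rule imp_trans[OF ex_mono ex_box_imp_box_ex])

lemma stable_goedel: "stable G (goedel \<phi>)"
  by (induct \<phi>) (simp_all add: stable_CBox stable_CBot stable_CAnd stable_COr stable_CEx)

lemma provable_CAnd: "G \<turnstile> a \<Longrightarrow> G \<turnstile> b \<Longrightarrow> G \<turnstile> CAnd a b"
  by (rule taut_cons2) auto

lemma box_imp_intro: "G \<turnstile> CImp a b \<Longrightarrow> G \<turnstile> CBox (COr (CNeg a) b)"
  by (intro MS4_ext.nec_box, erule taut_cons1) auto

lemma stable_box_imp_intro:
  assumes "stable G a" and "G \<turnstile> CImp (CAnd a b) c"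
  shows "G \<turnstile> CImp a (CBox (COr (CNeg b) c))"
proof -
  have "G \<turnstile> CImp a (COr (CNeg b) c)" using assms(2) by (rule taut_cons1) auto
  then have "G \<turnstile> CImp (CBox a) (CBox (COr (CNeg b) c))" by (rule box_mono)
  with assms(1) show ?thesis unfolding stable_def by (rule imp_trans)
qed

lemma box_imp_elim: "G \<turnstile> CImp (CAnd (CBox (COr (CNeg a) b)) a) b"
  by (rule taut_cons1[OF box_T[where a="COr (CNeg a) b"]]) auto

lemma goedel_ipc_axiom: "ipc_axiom \<phi> \<Longrightarrow> G \<turnstile> goedel \<phi>"
proof (induct rule: ipc_axiom.induct)
  case (2 a b c)
  let ?A = "goedel a" and ?B = "goedel b" and ?C = "goedel c"
  let ?X = "CBox (COr (CNeg ?A) (CBox (COr (CNeg ?B) ?C)))" and ?Y = "CBox (COr (CNeg ?A) ?B)"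
  have "G \<turnstile> CImp (CAnd (CAnd ?X ?Y) ?A) ?C"
    using box_imp_elim[where a="?A" and b="CBox (COr (CNeg ?B) ?C)"]
      box_imp_elim[where a="?A" and b="?B"] box_imp_elim[where a="?B" and b="?C"]
    by (rule taut_cons3) auto
  then have "G \<turnstile> CImp (CAnd ?X ?Y) (CBox (COr (CNeg ?A) ?C))"
    by (rule stable_box_imp_intro[OF stable_CAnd[OF stable_CBox stable_CBox]])
  then have "G \<turnstile> CImp ?X (CBox (COr (CNeg ?Y) (CBox (COr (CNeg ?A) ?C))))"
    by (rule stable_box_imp_intro[OF stable_CBox])
  then show ?case by (simp add: box_imp_intro)
next
  case (8 a c b)
  let ?A = "goedel a" and ?B = "goedel b" and ?C = "goedel c"
  let ?X = "CBox (COr (CNeg ?A) ?C)" and ?Y = "CBox (COr (CNeg ?B) ?C)"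
  have "G \<turnstile> CImp (CAnd (CAnd ?X ?Y) (COr ?A ?B)) ?C"
    using box_imp_elim[where a="?A" and b="?C"] box_imp_elim[where a="?B" and b="?C"]
    by (rule taut_cons2) auto
  then have "G \<turnstile> CImp (CAnd ?X ?Y) (CBox (COr (CNeg (COr ?A ?B)) ?C))"
    by (rule stable_box_imp_intro[OF stable_CAnd[OF stable_CBox stable_CBox]])
  then have "G \<turnstile> CImp ?X (CBox (COr (CNeg ?Y) (CBox (COr (CNeg (COr ?A ?B)) ?C))))"
    by (rule stable_box_imp_intro[OF stable_CBox])
  then show ?case by (simp add: box_imp_intro)
qed (simp_all, (intro box_imp_intro stable_box_imp_intro[OF stable_goedel] tautology_provable; auto)+)
  \<comment> \<open>in the other axioms a nested implication has a translated formula, hence a stable one,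
    as antecedent\<close>

lemma goedel_mipc_axiom:
  assumes "\<phi> \<in> mipc_axioms"
  shows "G \<turnstile> goedel (isubst s \<phi>)"
proof -
  define a b where "a = goedel (s 0)" and "b = goedel (s (Suc 0))"
  have "G \<turnstile> CImp (CBox (CAll (CAnd a b))) (CAnd (CBox (CAll a)) (CBox (CAll b)))"
    by (rule imp_trans[OF box_mono[OF all_CAnd] box_CAnd])
  moreover have "G \<turnstile> CImp (CAnd (CBox (CAll a)) (CBox (CAll b))) (CBox (CAll (CAnd a b)))"
    by (rule imp_trans[OF CAnd_box box_mono[OF CAnd_all]])
  moreover have "G \<turnstile> CImp (CBox (CAll a)) a"
    by (rule imp_trans[OF box_T all_T])
  moreover have "G \<turnstile> CImp (CBox (CAll a)) (CBox (CAll (CBox (CAll a))))"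
    by (rule imp_trans[OF box_4 box_mono[OF box_all_imp_all_box_all]])
  moreover have "G \<turnstile> CImp (CAnd (CEx a) (CEx b)) (CEx (CAnd (CEx a) b))"
    by (rule imp_trans[OF _ all_ex_CAnd], rule taut_cons1[OF ex_imp_all_ex[where a=a]]) auto
  moreover have "G \<turnstile> CImp (CEx a) (CBox (CAll (CEx a)))"
    using stable_CEx[OF stable_goedel] unfolding stable_def a_def
    by (rule imp_trans[OF _ box_mono[OF ex_imp_all_ex]])
  moreover note ex_COr COr_ex imp_ex ex_ex ex_box_all_imp_box_all
  ultimately show ?thesis
    using assms unfolding mipc_axioms_def
    by (auto simp: IIff_def a_def[symmetric] b_def[symmetric]
        intro!: provable_CAnd box_imp_intro)
qed

lemma isubst_isubst: "isubst s (isubst s' \<phi>) = isubst (\<lambda>n. isubst s (s' n)) \<phi>"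
  by (induct \<phi>) simp_all

lemma isubst_IAt: "isubst IAt \<phi> = \<phi>"
  by (induct \<phi>) simp_all

lemma ipc_axiom_isubst: "ipc_axiom \<phi> \<Longrightarrow> ipc_axiom (isubst s \<phi>)"
  by (induct rule: ipc_axiom.induct) (auto intro: ipc_axiom.intros)

lemma goedel_MIPC_ext:
  assumes "\<phi> \<in> MIPC_ext H"
    and extra: "\<And>\<psi> s. \<psi> \<in> H \<Longrightarrow> G \<turnstile> goedel (isubst s \<psi>)"
  shows "G \<turnstile> goedel (isubst s \<phi>)"
  using assms(1)
proof (induct arbitrary: s rule: MIPC_ext.induct)
  case (ipc \<phi>)
  then show ?case by (intro goedel_ipc_axiom ipc_axiom_isubst)
next
  case (ax \<phi>)
  then show ?case by (rule goedel_mipc_axiom)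
next
  case (extra \<phi>)
  then show ?case by (rule assms(2))
next
  case (mp \<phi> \<psi>)
  have "G \<turnstile> CBox (COr (CNeg (goedel (isubst s \<phi>))) (goedel (isubst s \<psi>)))"
    using mp.hyps(4)[of s] by simp
  with mp.hyps(2) show ?case
    using box_imp_elim by (rule taut_cons3) auto
next
  case (subst \<phi> s')
  show ?case using subst.hyps(2)[of "\<lambda>n. isubst s (s' n)"] by (simp add: isubst_isubst)
next
  case (nec \<phi>)
  show ?case using nec.hyps(2)[of s] by (simp add: MS4_ext.nec_box MS4_ext.nec_all)
qed

section \<open>Kuroda's axiom in MGrz and LKur\<close>

definition grz_axiom :: cfm where
  "grz_axiom = CImp (CBox (CImp (CBox (CImp cp (CBox cp))) cp)) cp"

definition lkur_axiom :: cfm where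
  "lkur_axiom = CImp (CBox (CAll (CDia (CBox cp)))) (CDia (CAll cp))"

definition kur_axiom :: ifm where
  "kur_axiom = IImp (IAll (INeg (INeg ip))) (INeg (INeg (IAll ip)))"

definition goedel_not :: "cfm \<Rightarrow> cfm" where
  "goedel_not a = CBox (COr (CNeg a) CBot)"

lemma goedel_isubst_kur_axiom:
  "goedel (isubst s kur_axiom) =
    CBox (COr (CNeg (CBox (CAll (goedel_not (goedel_not (goedel (s 0)))))))
      (goedel_not (goedel_not (CBox (CAll (goedel (s 0)))))))"
  by (simp add: kur_axiom_def INeg_def goedel_not_def)

lemma goedel_not_not_imp_dia: "G \<turnstile> CImp (goedel_not (goedel_not a)) (CDia a)"
proof -
  have "G \<turnstile> CImp (goedel_not (goedel_not a)) (CNeg (goedel_not a))"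
    unfolding goedel_not_def[of "goedel_not a"]
    by (rule taut_cons1[OF box_T[where a="COr (CNeg (goedel_not a)) CBot"]]) auto
  moreover have "G \<turnstile> CImp (CBox (CNeg a)) (goedel_not a)"
    unfolding goedel_not_def by (intro box_mono tautology_provable) simp
  ultimately show ?thesis by (rule taut_cons2) auto
qed

lemma box_dia_imp_goedel_not_not: "G \<turnstile> CImp (CBox (CDia a)) (goedel_not (goedel_not a))"
proof -
  have "G \<turnstile> CImp (goedel_not a) (CBox (CNeg a))"
    unfolding goedel_not_def by (intro box_mono tautology_provable) simp
  then have "G \<turnstile> CImp (CDia a) (COr (CNeg (goedel_not a)) CBot)"
    by (rule taut_cons1) auto
  then show ?thesis
    unfolding goedel_not_def[of "goedel_not a"] by (rule box_mono)
qed

text \<open>Grz applied to \<open>\<not> a\<close> shows that every \<open>a\<close>-world sees an \<open>a\<close>-world satisfying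
  \<open>q = \<box>(\<not> a \<longrightarrow> \<box>\<not> a)\<close>; under \<open>\<box>\<diamond>a\<close>, \<open>\<box>a\<close> holds there.\<close>
lemma grz_imp_mckinsey:
  assumes "G \<turnstile> grz_axiom"
  shows "G \<turnstile> CImp (CBox (CDia a)) (CDia (CBox a))"
proof -
  define q where "q = CBox (CImp (CNeg a) (CBox (CNeg a)))"
  have "G \<turnstile> CImp (CBox (CImp q (CNeg a))) (CNeg a)"
    using MS4_ext.subst[OF assms, of "subst_pq (CNeg a) a"] by (simp add: grz_axiom_def q_def)
  moreover have "G \<turnstile> CImp (CBox (CNeg (CAnd q a))) (CBox (CImp q (CNeg a)))"
    by (intro box_mono tautology_provable) auto
  ultimately have "G \<turnstile> CImp a (CDia (CAnd q a))"
    by (rule taut_cons2) auto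
  then have "G \<turnstile> CImp (CDia a) (CDia (CAnd q a))"
    by (rule imp_trans[OF dia_mono dia_dia])
  then have "G \<turnstile> CImp (CBox (CDia a)) (CAnd (CDia (CAnd q a)) (CBox (CBox (CDia a))))"
    using box_T box_4 by (rule taut_cons3) auto
  moreover have "G \<turnstile> CImp (CAnd q (CBox (CDia a))) (CBox a)"
    unfolding q_def by (intro box_mono2 tautology_provable) auto
  then have "G \<turnstile> CImp (CDia (CAnd (CAnd q a) (CBox (CDia a)))) (CDia (CBox a))"
    by (intro dia_mono, elim taut_cons1) auto
  ultimately show ?thesis
    using dia_box_CAnd by (blast intro: imp_trans)
qed

lemma goedel_kur_instance:
  assumes grz: "G \<turnstile> grz_axiom" and lkur: "G \<turnstile> lkur_axiom" and "stable G a"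
  shows "G \<turnstile> CImp (CBox (CAll (goedel_not (goedel_not a)))) (goedel_not (goedel_not (CBox (CAll a))))"
proof -
  let ?hyp = "CBox (CAll (goedel_not (goedel_not a)))"
  have "G \<turnstile> CImp (goedel_not (goedel_not a)) (CDia (CBox a))"
    using \<open>stable G a\<close> unfolding stable_def by (rule imp_trans[OF goedel_not_not_imp_dia dia_mono])
  moreover have "G \<turnstile> CImp (CBox (CAll (CDia (CBox a)))) (CDia (CAll a))"
    using MS4_ext.subst[OF lkur, of "subst_pq a a"] by (simp add: lkur_axiom_def)
  ultimately have "G \<turnstile> CImp ?hyp (CDia (CAll a))"
    by (blast intro: imp_trans box_mono all_mono)
  then have "G \<turnstile> CImp ?hyp (CBox (CDia (CAll a)))"
    by (rule imp_trans[OF box_4 box_mono])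
  then have "G \<turnstile> CImp ?hyp (CDia (CBox (CAll a)))"
    by (rule imp_trans[OF _ grz_imp_mckinsey[OF grz]])
  then have "G \<turnstile> CImp ?hyp (CBox (CDia (CBox (CAll a))))"
    by (rule imp_trans[OF box_4 box_mono])
  then show ?thesis
    by (rule imp_trans[OF _ box_dia_imp_goedel_not_not])
qed

lemma goedel_Kur:
  assumes "G \<turnstile> grz_axiom" and "G \<turnstile> lkur_axiom" and "\<phi> \<in> Kur"
  shows "G \<turnstile> goedel \<phi>"
proof -
  have "\<phi> \<in> MIPC_ext {kur_axiom}"
    using assms(3) by (simp add: Kur_def kur_axiom_def)
  then have "G \<turnstile> goedel (isubst IAt \<phi>)"
  proof (rule goedel_MIPC_ext)
    fix \<psi> s
    assume "\<psi> \<in> {kur_axiom}"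
    then show "G \<turnstile> goedel (isubst s \<psi>)"
      using goedel_kur_instance[OF assms(1,2) stable_goedel]
      by (simp add: goedel_isubst_kur_axiom box_imp_intro)
  qed
  then show ?thesis by (simp add: isubst_IAt)
qed

lemma lkur_axiom_if_goedel_kur_axiom:
  assumes "G \<turnstile> goedel kur_axiom"
  shows "G \<turnstile> lkur_axiom"
proof -
  let ?a = "CBox cp"
  have "G \<turnstile> CBox (COr (CNeg (CBox (CAll (goedel_not (goedel_not ?a)))))
                (goedel_not (goedel_not (CBox (CAll ?a)))))"
    using assms goedel_isubst_kur_axiom[of IAt] by (simp add: isubst_IAt)
  then have "G \<turnstile> CImp (CBox (CAll (goedel_not (goedel_not ?a)))) (goedel_not (goedel_not (CBox (CAll ?a))))"
    by (rule taut_cons1[OF MS4_ext.mp[OF _ box_T]]) auto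
  moreover have "G \<turnstile> CImp (CBox (CAll (CDia ?a))) (CBox (CAll (goedel_not (goedel_not ?a))))"
    by (rule imp_trans[OF box_4 box_mono[OF imp_trans[OF box_all_imp_all_box all_mono[OF box_dia_imp_goedel_not_not]]]])
  moreover have "G \<turnstile> CImp (goedel_not (goedel_not (CBox (CAll ?a)))) (CDia (CAll cp))"
    by (rule imp_trans[OF goedel_not_not_imp_dia dia_mono[OF imp_trans[OF box_T all_mono[OF box_T]]]])
  ultimately show ?thesis
    unfolding lkur_axiom_def by (blast intro: imp_trans)
qed

section \<open>Kripke semantics and a countermodel\<close>

primrec holds :: "('w \<Rightarrow> 'w \<Rightarrow> bool) \<Rightarrow> ('w \<Rightarrow> 'w \<Rightarrow> bool) \<Rightarrow> (nat \<Rightarrow> 'w set) \<Rightarrow> cfm \<Rightarrow> 'w \<Rightarrow> bool"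
  where
  "holds R E V CBot w = False"
| "holds R E V (CAt n) w = (w \<in> V n)"
| "holds R E V (CAnd a b) w = (holds R E V a w \<and> holds R E V b w)"
| "holds R E V (COr a b) w = (holds R E V a w \<or> holds R E V b w)"
| "holds R E V (CImp a b) w = (holds R E V a w \<longrightarrow> holds R E V b w)"
| "holds R E V (CBox a) w = (\<forall>u. R w u \<longrightarrow> holds R E V a u)"
| "holds R E V (CAll a) w = (\<forall>u. E w u \<longrightarrow> holds R E V a u)"

lemma holds_CNeg [simp]: "holds R E V (CNeg a) w = (\<not> holds R E V a w)"
  by (simp add: CNeg_def)

lemma holds_CDia [simp]: "holds R E V (CDia a) w = (\<exists>u. R w u \<and> holds R E V a u)"
  by (simp add: CDia_def)

lemma holds_CEx [simp]: "holds R E V (CEx a) w = (\<exists>u. E w u \<and> holds R E V a u)"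
  by (simp add: CEx_def)

lemma holds_csubst: "holds R E V (csubst s a) w = holds R E (\<lambda>n. {u. holds R E V (s n) u}) a w"
  by (induct a arbitrary: w) auto

definition valid_in :: "('w \<Rightarrow> 'w \<Rightarrow> bool) \<Rightarrow> ('w \<Rightarrow> 'w \<Rightarrow> bool) \<Rightarrow> cfm \<Rightarrow> bool" where
  "valid_in R E a \<longleftrightarrow> (\<forall>V w. holds R E V a w)"

definition ms4_frame :: "('w \<Rightarrow> 'w \<Rightarrow> bool) \<Rightarrow> ('w \<Rightarrow> 'w \<Rightarrow> bool) \<Rightarrow> bool" where
  "ms4_frame R E \<longleftrightarrow> reflp R \<and> transp R \<and> equivp E \<and>
    (\<forall>w v u. E w v \<and> R v u \<longrightarrow> (\<exists>x. R w x \<and> E x u))"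

lemma ms4_axioms_valid:
  assumes "ms4_frame R E" and "a \<in> ms4_axioms"
  shows "valid_in R E a"
proof -
  have R_refl: "R w w" and R_trans: "R w v \<Longrightarrow> R v u \<Longrightarrow> R w u"
    and E_refl: "E w w" and E_sym: "E w v \<Longrightarrow> E v w" and E_trans: "E w v \<Longrightarrow> E v u \<Longrightarrow> E w u"
    and commute: "E w v \<Longrightarrow> R v u \<Longrightarrow> \<exists>x. R w x \<and> E x u" for w v u
    using assms(1) unfolding ms4_frame_def equivp_reflp_symp_transp
    by (blast dest: reflpD sympD transpD)+
  show ?thesis
    using assms(2) unfolding ms4_axioms_def valid_in_def
    by (auto; meson R_refl R_trans E_refl E_sym E_trans commute)
qed

lemma MS4_ext_sound:
  assumes "ms4_frame R E" and "\<forall>g\<in>G. valid_in R E g" and "a \<in> MS4_ext G"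
  shows "valid_in R E a"
  using assms(3)
proof (induct rule: MS4_ext.induct)
  case (cpc a)
  then show ?case by (cases rule: cpc_axiom.cases) (auto simp: valid_in_def)
next
  case (ax a)
  then show ?case by (rule ms4_axioms_valid[OF assms(1)])
next
  case (extra a)
  then show ?case using assms(2) by blast
qed (auto simp: valid_in_def holds_csubst)

datatype point = W0 | W1 | W2

lemma all_point: "(\<forall>w. P w) \<longleftrightarrow> P W0 \<and> P W1 \<and> P W2"
  by (metis point.exhaust)

lemma ex_point: "(\<exists>w. P w) \<longleftrightarrow> P W0 \<or> P W1 \<or> P W2"
  by (metis point.exhaust)

text \<open>\<open>W1\<close> lies below the cluster \<open>{W0, W2}\<close>; the \<open>E\<close>-classes are \<open>{W0}\<close> and \<open>{W1, W2}\<close>.\<close>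
definition R3 :: "point \<Rightarrow> point \<Rightarrow> bool" where
  "R3 w u \<longleftrightarrow> w = W1 \<or> u \<noteq> W1"

definition E3 :: "point \<Rightarrow> point \<Rightarrow> bool" where
  "E3 w u \<longleftrightarrow> w = u \<or> (w \<noteq> W0 \<and> u \<noteq> W0)"

lemma ms4_frame_R3_E3: "ms4_frame R3 E3"
  unfolding ms4_frame_def equivp_reflp_symp_transp reflp_def symp_def transp_def
  by (simp add: all_point ex_point R3_def E3_def)

lemma lkur_axiom_valid_in_R3_E3: "valid_in R3 E3 lkur_axiom"
  unfolding valid_in_def lkur_axiom_def
  by (auto simp: all_point ex_point R3_def E3_def)

lemma goedel_kur_axiom_fails_at_W1: "\<not> holds R3 E3 (\<lambda>_. {W0, W2}) (goedel kur_axiom) W1"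
  by (simp add: kur_axiom_def INeg_def all_point ex_point R3_def E3_def)

lemma goedel_kur_axiom_notin_LKur: "goedel kur_axiom \<notin> LKur"
proof
  assume "goedel kur_axiom \<in> LKur"
  then have "valid_in R3 E3 (goedel kur_axiom)"
    unfolding LKur_def lkur_axiom_def[symmetric]
    by (rule MS4_ext_sound[OF ms4_frame_R3_E3, rotated]) (simp add: lkur_axiom_valid_in_R3_E3)
  with goedel_kur_axiom_fails_at_W1 show False
    unfolding valid_in_def by blast
qed

lemma MS4_ext_minimal: "A \<subseteq> MS4_ext B \<Longrightarrow> MS4_ext A \<subseteq> MS4_ext B"
proof
  fix a
  assume "A \<subseteq> MS4_ext B" and "a \<in> MS4_ext A"
  from this(2) show "a \<in> MS4_ext B"
    by (induct rule: MS4_ext.induct) (use \<open>A \<subseteq> MS4_ext B\<close> in \<open>auto intro: MS4_ext.intros\<close>)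
qed

lemma subset_join1: "L \<subseteq> join L M"
  unfolding join_def by (auto intro: MS4_ext.extra)

lemma subset_join2: "M \<subseteq> join L M"
  unfolding join_def by (auto intro: MS4_ext.extra)

lemma join_subset_join: "M \<subseteq> join L N \<Longrightarrow> join L M \<subseteq> join L N"
  unfolding join_def by (intro MS4_ext_minimal) (auto intro: MS4_ext.extra)

lemma grz_axiom_in_MGrz: "grz_axiom \<in> MGrz"
  unfolding MGrz_def grz_axiom_def by (rule MS4_ext.extra) simp

lemma lkur_axiom_in_LKur: "lkur_axiom \<in> LKur"
  unfolding LKur_def lkur_axiom_def by (rule MS4_ext.extra) simp

lemma goedel_kur_axiom_in_GKur: "goedel kur_axiom \<in> GKur"
proof -
  have "kur_axiom \<in> Kur"
    unfolding Kur_def kur_axiom_def by (rule MIPC_ext.extra) simp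
  then show ?thesis
    unfolding GKur_def by (intro MS4_ext.extra imageI)
qed

lemma LKur_subset_GKur: "LKur \<subseteq> GKur"
proof -
  have "lkur_axiom \<in> GKur"
    using goedel_kur_axiom_in_GKur unfolding GKur_def by (rule lkur_axiom_if_goedel_kur_axiom)
  then show ?thesis
    unfolding LKur_def lkur_axiom_def[symmetric] GKur_def by (intro MS4_ext_minimal) simp
qed

lemma GKur_subset_join_MGrz_LKur: "GKur \<subseteq> join MGrz LKur"
proof -
  have "grz_axiom \<in> join MGrz LKur" and "lkur_axiom \<in> join MGrz LKur"
    using grz_axiom_in_MGrz lkur_axiom_in_LKur subset_join1 subset_join2 by blast+
  then have "goedel ` Kur \<subseteq> join MGrz LKur"
    unfolding join_def using goedel_Kur by blast
  then show ?thesis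
    unfolding GKur_def join_def by (rule MS4_ext_minimal)
qed

theorem proposition4p14:
  shows "LKur \<subset> GKur \<and> join MGrz LKur = join MGrz GKur"
proof
  show "LKur \<subset> GKur"
    using LKur_subset_GKur goedel_kur_axiom_in_GKur goedel_kur_axiom_notin_LKur by blast
  have "join MGrz LKur \<subseteq> join MGrz GKur"
    using LKur_subset_GKur subset_join2[of GKur MGrz] by (intro join_subset_join) blast
  moreover have "join MGrz GKur \<subseteq> join MGrz LKur"
    by (rule join_subset_join[OF GKur_subset_join_MGrz_LKur])
  ultimately show "join MGrz LKur = join MGrz GKur"
    by (rule antisym)
qed

end
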